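(* Let $T\in\mathcal{T}^*_3$ with root $v$ and $n$ vertices. Then \[\lambda(T,v)\ge 1+\sum_{j\ge 0}c_j m_j(T,v),\] where the numbers $c_j$ ($j\ge 0$) are defined recursively by \[c_j=1-\frac{1+\frac{j}{2}+\sum_{i=0}^{j-1}c_i}{2^{j+1}+j}\] (so $c_0=\frac12$).
   Context: All trees are finite. A subtree of a tree $T$ is a nonempty vertex set inducing a connected subgraph. For a vertex $v$, $\lambda(T,v)$ is the average number of vertices of a subtree of $T$ containing $v$, averaged uniformly over all subtrees containing $v$. $\mathcal{T}^*_3$ is the set of rooted trees in which the root has degree at least 2 and every other vertex of degree at least 2 has degree at least 3, together with the single-vertex rooted tree. In a rooted tree with root $v$, each vertex $w\neq v$ has as parent its neighbour on the path from $v$ to $w$, and its other neighbours are its children. The rank of a non-root vertex is defined inductively: a vertex with no children has rank 0, and otherwise its rank is one more than the maximum rank of its children (equivalently, the maximum length of a path starting at the vertex and not containing its parent). The root has no rank. $m_j(T,v)$ denotes the number of vertices of rank $j$ when $T$ is rooted at $v$. *)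

theory Defs
  imports Main "HOL.Real"
begin

definition sym_graph :: "'a set \<Rightarrow> ('a \<Rightarrow> 'a \<Rightarrow> bool) \<Rightarrow> bool" where
  "sym_graph V E \<longleftrightarrow> (\<forall>x y. E x y \<longrightarrow> E y x \<and> x \<noteq> y \<and> x \<in> V \<and> y \<in> V)"

definition induces_connected :: "('a \<Rightarrow> 'a \<Rightarrow> bool) \<Rightarrow> 'a set \<Rightarrow> bool" where
  "induces_connected E S \<longleftrightarrow> S \<noteq> {} \<and>
     (\<forall>x\<in>S. \<forall>y\<in>S. (\<lambda>a b. E a b \<and> a \<in> S \<and> b \<in> S)\<^sup>*\<^sup>* x y)"

definition edges :: "('a \<Rightarrow> 'a \<Rightarrow> bool) \<Rightarrow> 'a set set" where
  "edges E = {{x, y} | x y. E x y}"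

definition is_tree :: "'a set \<Rightarrow> ('a \<Rightarrow> 'a \<Rightarrow> bool) \<Rightarrow> bool" where
  "is_tree V E \<longleftrightarrow> finite V \<and> sym_graph V E \<and> induces_connected E V
     \<and> card (edges E) = card V - 1"

definition degree :: "('a \<Rightarrow> 'a \<Rightarrow> bool) \<Rightarrow> 'a \<Rightarrow> nat" where
  "degree E w = card {u. E w u}"

definition is_path :: "'a set \<Rightarrow> ('a \<Rightarrow> 'a \<Rightarrow> bool) \<Rightarrow> 'a list \<Rightarrow> bool" where
  "is_path V E xs \<longleftrightarrow> xs \<noteq> [] \<and> set xs \<subseteq> V \<and> distinct xs \<and>
     (\<forall>i. Suc i < length xs \<longrightarrow> E (xs ! i) (xs ! Suc i))"

definition parent :: "'a set \<Rightarrow> ('a \<Rightarrow> 'a \<Rightarrow> bool) \<Rightarrow> 'a \<Rightarrow> 'a \<Rightarrow> 'a" where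
  "parent V E v w = (THE u. \<exists>xs. is_path V E (xs @ [u, w]) \<and> hd (xs @ [u, w]) = v)"

definition rank :: "'a set \<Rightarrow> ('a \<Rightarrow> 'a \<Rightarrow> bool) \<Rightarrow> 'a \<Rightarrow> 'a \<Rightarrow> nat" where
  "rank V E v w = Max {length xs - 1 | xs. is_path V E xs \<and> hd xs = w
                                           \<and> parent V E v w \<notin> set xs}"

definition m_rank :: "'a set \<Rightarrow> ('a \<Rightarrow> 'a \<Rightarrow> bool) \<Rightarrow> 'a \<Rightarrow> nat \<Rightarrow> nat" where
  "m_rank V E v j = card {w \<in> V. w \<noteq> v \<and> rank V E v w = j}"

definition in_T3star :: "'a set \<Rightarrow> ('a \<Rightarrow> 'a \<Rightarrow> bool) \<Rightarrow> 'a \<Rightarrow> bool" where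
  "in_T3star V E v \<longleftrightarrow> V = {v} \<or>
     (degree E v \<ge> 2 \<and> (\<forall>w\<in>V. w \<noteq> v \<longrightarrow> degree E w \<ge> 2 \<longrightarrow> degree E w \<ge> 3))"

definition subtrees_at :: "'a set \<Rightarrow> ('a \<Rightarrow> 'a \<Rightarrow> bool) \<Rightarrow> 'a \<Rightarrow> 'a set set" where
  "subtrees_at V E v = {S. S \<subseteq> V \<and> v \<in> S \<and> induces_connected E S}"

definition local_mean :: "'a set \<Rightarrow> ('a \<Rightarrow> 'a \<Rightarrow> bool) \<Rightarrow> 'a \<Rightarrow> real" where
  "local_mean V E v = (\<Sum>S\<in>subtrees_at V E v. real (card S)) / real (card (subtrees_at V E v))"

text \<open>The constants c_j: clist k = [c_0, ..., c_{k-1}].\<close>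
fun clist :: "nat \<Rightarrow> real list" where
  "clist 0 = []"
| "clist (Suc j) = clist j @
     [1 - (1 + real j / 2 + sum_list (clist j)) / (2 ^ (j + 1) + real j)]"

definition cc :: "nat \<Rightarrow> real" where
  "cc j = clist (Suc j) ! j"

end

theory Submission
  imports Defs
begin

text \<open>Root the tree at \<open>v\<close>. For a vertex \<open>u\<close> let \<open>N(u)\<close> and \<open>S(u)\<close> be the number and the total
  size of the subtrees of the branch below \<open>u\<close> that contain \<open>u\<close>, and \<open>R(u)\<close> the sum of
  \<open>c (rank z)\<close> over the proper descendants \<open>z\<close> of \<open>u\<close>; the theorem is \<open>S(v) \<ge> N(v) (1 + R(v))\<close>.
  Attaching the branch of a child \<open>u\<close> at \<open>w\<close> multiplies \<open>N\<close> by \<open>1 + N(u)\<close>, and this mean bound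
  passes from the children to \<open>w\<close> as soon as every child also satisfies the weight bound
  \<open>c (rank u) + R(u) \<le> (1 - c (rank u)) N(u)\<close>. Both bounds are proved together by induction on the rank.
  A non-root vertex of rank \<open>r + 1\<close> has at least two children, one of them of rank \<open>r\<close>, so that
  \<open>N\<close> grows at least like \<open>3 \<cdot> 2\<^sup>r\<close>, and the recursion defining \<open>c\<^sub>j\<close> is just what is needed for
  the weight bound to propagate.\<close>

lemma length_clist [simp]: "length (clist j) = j"
  by (induction j) auto

lemma nth_clist: "i < j \<Longrightarrow> clist j ! i = cc i"
proof (induction j)
  case (Suc j)
  show ?case
  proof (cases "i < j")
    case True
    then show ?thesis using Suc by (simp add: nth_append)
  next
    case False
    then have "i = j" using Suc by simp
    then show ?thesis by (simp add: cc_def)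
  qed
qed simp

lemma sum_list_clist: "sum_list (clist j) = (\<Sum>i<j. cc i)"
  by (simp add: sum_list_sum_nth nth_clist atLeast0LessThan)

definition acoef :: "nat \<Rightarrow> real" where
  "acoef j = (1 + real j / 2 + (\<Sum>i<j. cc i)) / (2 ^ (j + 1) + real j)"

lemma cc_eq_one_minus_acoef: "cc j = 1 - acoef j"
  unfolding cc_def by (simp add: acoef_def nth_append sum_list_clist)

lemma one_plus_le_two_power: "1 + real n \<le> 2 ^ n"
proof -
  have "n + 1 \<le> 2 ^ n" by (induction n) auto
  then have "real (n + 1) \<le> real (2 ^ n)" by linarith
  then show ?thesis by simp
qed

lemma cc_bounds: "1/2 \<le> cc j \<and> cc j \<le> 1"
proof (induction j rule: less_induct)
  case (less j)
  have "(\<Sum>i<j. cc i) \<le> real j"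
    using less sum_mono[of "{..<j}" cc "\<lambda>_. 1"] by simp
  moreover have "real j / 2 \<le> (\<Sum>i<j. cc i)"
    using less sum_mono[of "{..<j}" "\<lambda>_. 1/2" cc] by simp
  moreover have "0 < 2 ^ (j + 1) + real j" by (simp add: add_pos_nonneg)
  ultimately have "0 \<le> acoef j" "acoef j \<le> 1/2"
    using one_plus_le_two_power[of j] unfolding acoef_def by (simp_all add: divide_simps)
  then show ?case by (simp add: cc_eq_one_minus_acoef)
qed

lemma acoef_bounds: "0 \<le> acoef j" "acoef j \<le> 1/2"
  using cc_bounds[of j] by (simp_all add: cc_eq_one_minus_acoef)

lemma acoef_0: "acoef 0 = 1/2"
  by (simp add: acoef_def)

lemma cc_0: "cc 0 = 1/2"
  by (simp add: cc_eq_one_minus_acoef acoef_0)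

lemma acoef_lower: "1 + real j \<le> acoef j * (2 ^ (j + 1) + real j)"
proof -
  have "real j / 2 \<le> (\<Sum>i<j. cc i)"
    using sum_mono[of "{..<j}" "\<lambda>_. 1/2" cc] cc_bounds by simp
  moreover have "0 < 2 ^ (j + 1) + real j" by (simp add: add_pos_nonneg)
  ultimately show ?thesis unfolding acoef_def by simp
qed

lemma acoef_Suc:
  "acoef (Suc r) * (2 * 2 ^ Suc r + real (Suc r)) = acoef r * (2 ^ Suc r + real r) + 3/2 - acoef r"
proof -
  have "0 < 2 * 2 ^ Suc r + real (Suc r)" by (simp add: add_pos_nonneg)
  then have "acoef (Suc r) * (2 * 2 ^ Suc r + real (Suc r)) = 1 + real (Suc r) / 2 + (\<Sum>i<Suc r. cc i)"
    unfolding acoef_def by simp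
  also have "\<dots> = (1 + real r / 2 + (\<Sum>i<r. cc i)) + 1/2 + cc r"
    by (simp add: field_simps)
  also have "0 < 2 ^ Suc r + real r" by (simp add: add_pos_nonneg)
  then have "1 + real r / 2 + (\<Sum>i<r. cc i) = acoef r * (2 ^ Suc r + real r)"
    unfolding acoef_def by simp
  finally show ?thesis by (simp add: cc_eq_one_minus_acoef)
qed

lemma acoef_mul_ge_half:
  assumes "3 * 2 ^ s - 1 \<le> X"
  shows "1/2 \<le> acoef (Suc s) * X"
proof -
  define t :: real where "t = 2 ^ Suc s"
  define r where "r = real (Suc s)"
  have t: "1 + r \<le> t" "2 \<le> t" "1 \<le> r"
    using one_plus_le_two_power[of "Suc s"] by (simp_all add: t_def r_def)
  have B: "0 < 2 * t + r" using t by simp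
  have X: "3 * t / 2 - 1 \<le> X" using assms by (simp add: t_def)
  have "(1 + r) * (3 * t / 2 - 1) \<le> acoef (Suc s) * (2 * t + r) * X"
    by (rule mult_mono) (use acoef_lower[of "Suc s"] X t in \<open>auto simp: t_def r_def\<close>)
  moreover have "2 * (3 * t / 2 - 1) \<le> (1 + r) * (3 * t / 2 - 1)"
    by (rule mult_right_mono) (use t in auto)
  ultimately have "(1/2) * (2 * t + r) \<le> (acoef (Suc s) * X) * (2 * t + r)"
    using t by (simp add: algebra_simps)
  then show ?thesis using B by (simp add: mult_le_cancel_right)
qed

lemma acoef_le_double_Suc: "acoef s \<le> 2 * acoef (Suc s)"
proof -
  define t :: real where "t = 2 ^ Suc s"
  define q where "q = acoef s"
  have B: "0 < 2 * t + real (Suc s)" by (simp add: t_def add_pos_nonneg)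
  have q: "0 \<le> q" "q \<le> 1/2" using acoef_bounds by (simp_all add: q_def)
  have "(2 * acoef (Suc s) - q) * (2 * t + real (Suc s)) = q * (real s - 3) + 3"
    using acoef_Suc[of s] by (simp add: t_def q_def algebra_simps)
  also have "0 \<le> q * (real s - 3) + 3"
    using q mult_left_mono[of "-3" "real s - 3" q] by simp
  finally show ?thesis using B by (simp add: zero_le_mult_iff q_def)
qed

lemma acoef_Suc_base:
  "acoef s * (3 * 2 ^ s - 2) + 3/2 \<le> acoef (Suc s) * (3 * 2 ^ Suc s - 1)"
proof -
  define t :: real where "t = 2 ^ Suc s"
  define r where "r = real (Suc s)"
  define q where "q = acoef s"
  have t: "1 + r \<le> t" "1 \<le> r"
    using one_plus_le_two_power[of "Suc s"] by (simp_all add: t_def r_def)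
  have B: "0 < 2 * t + r" using t by simp
  have q: "0 \<le> q" using acoef_bounds by (simp add: q_def)
  have rel: "acoef (Suc s) * (2 * t + r) = q * (t + r - 1) + 3/2 - q"
    using acoef_Suc[of s] by (simp add: t_def r_def q_def)
  have "(acoef (Suc s) * (3 * t - 1) - 3/2 - q * (3 * t / 2 - 2)) * (2 * t + r)
      = (acoef (Suc s) * (2 * t + r)) * (3 * t - 1) - 3/2 * (2 * t + r) - q * (3 * t / 2 - 2) * (2 * t + r)"
    by (simp add: algebra_simps)
  also have "\<dots> = q * ((3/2 * r - 3) * t + r + 2) + 3/2 * (t - 1 - r)"
    unfolding rel by (simp add: field_simps)
  also have "0 \<le> \<dots>"
  proof -
    have "0 \<le> (3/2 * r - 3) * t + r + 2"
    proof (cases "s = 0")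
      case True then show ?thesis by (simp add: t_def r_def)
    next
      case False
      then have "2 \<le> r" by (simp add: r_def)
      then show ?thesis using t by simp
    qed
    then show ?thesis using q t by simp
  qed
  finally have "0 \<le> acoef (Suc s) * (3 * t - 1) - 3/2 - q * (3 * t / 2 - 2)"
    using B by (simp add: zero_le_mult_iff)
  then show ?thesis by (simp add: t_def q_def)
qed

text \<open>The arithmetic core of the induction step: \<open>X = 1 + N(u)\<close> for a child \<open>u\<close> of maximal
  rank \<open>s\<close>, and \<open>Q \<ge> 2\<close> counts the subtrees through the remaining children.  The difference of
  the two sides is a sum of three products of nonnegative factors, one for each preceding lemma.\<close>

lemma acoef_step:
  fixes Q X :: real
  assumes Q: "2 \<le> Q" and X: "3 * 2 ^ s - 1 \<le> X"
  shows "cc (Suc s) + (Q - 1) / 2 + acoef s * (X - 1) \<le> acoef (Suc s) * Q * X"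
proof -
  define t :: real where "t = 2 ^ Suc s"
  define q where "q = acoef s"
  define a where "a = acoef (Suc s)"
  have "a * Q * X - (cc (Suc s) + (Q - 1) / 2 + q * (X - 1))
      = (Q - 2) * (a * X - 1/2) + (X - (3 * t / 2 - 1)) * (2 * a - q)
        + (a * (3 * t - 1) - 3/2 - q * (3 * t / 2 - 2))"
    by (simp add: cc_eq_one_minus_acoef a_def q_def field_simps)
  also have "0 \<le> \<dots>"
  proof -
    have "0 \<le> (Q - 2) * (a * X - 1/2)"
      using Q acoef_mul_ge_half[OF X] by (simp add: a_def)
    moreover have "0 \<le> (X - (3 * t / 2 - 1)) * (2 * a - q)"
      using X acoef_le_double_Suc[of s] by (simp add: a_def q_def t_def)
    moreover have "0 \<le> a * (3 * t - 1) - 3/2 - q * (3 * t / 2 - 2)"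
      using acoef_Suc_base[of s] by (simp add: a_def q_def t_def algebra_simps)
    ultimately show ?thesis by linarith
  qed
  finally show ?thesis by (simp add: a_def q_def)
qed

abbreviation induced_adj :: "('a \<Rightarrow> 'a \<Rightarrow> bool) \<Rightarrow> 'a set \<Rightarrow> 'a \<Rightarrow> 'a \<Rightarrow> bool" where
  "induced_adj E S \<equiv> (\<lambda>a b. E a b \<and> a \<in> S \<and> b \<in> S)"

lemma is_path_Cons:
  "is_path S E (x # xs) \<longleftrightarrow> x \<in> S \<and> (xs = [] \<or> (is_path S E xs \<and> x \<notin> set xs \<and> E x (hd xs)))"
proof (cases xs)
  case Nil then show ?thesis by (simp add: is_path_def)
next
  case (Cons y ys)
  have "(\<forall>i. Suc i < length (x # y # ys) \<longrightarrow> E ((x # y # ys) ! i) ((x # y # ys) ! Suc i))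
    \<longleftrightarrow> E x y \<and> (\<forall>i. Suc i < length (y # ys) \<longrightarrow> E ((y # ys) ! i) ((y # ys) ! Suc i))"
    (is "?L \<longleftrightarrow> ?R")
  proof
    assume ?L
    show ?R
    proof
      show "E x y" using spec[OF \<open>?L\<close>, of 0] by simp
      show "\<forall>i. Suc i < length (y # ys) \<longrightarrow> E ((y # ys) ! i) ((y # ys) ! Suc i)"
        using \<open>?L\<close> by (metis Suc_less_eq length_Cons nth_Cons_Suc)
    qed
  next
    assume ?R
    show ?L
    proof (intro allI impI)
      fix i assume "Suc i < length (x # y # ys)"
      then show "E ((x # y # ys) ! i) ((x # y # ys) ! Suc i)"
        using \<open>?R\<close> by (cases i) auto
    qed
  qed
  then show ?thesis using Cons by (auto simp: is_path_def)
qed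

lemma is_path_single [simp]: "is_path S E [x] \<longleftrightarrow> x \<in> S"
  by (simp add: is_path_Cons)

lemma is_path_append_left:
  "is_path S E (xs @ ys) \<Longrightarrow> xs \<noteq> [] \<Longrightarrow> is_path S E xs"
proof (induction xs)
  case Nil then show ?case by simp
next
  case (Cons x xs)
  show ?case
  proof (cases "xs = []")
    case True then show ?thesis using Cons.prems by (simp add: is_path_Cons)
  next
    case False
    then show ?thesis using Cons by (auto simp: is_path_Cons)
  qed
qed

lemma is_path_append_edge:
  "is_path S E (xs @ y # ys) \<Longrightarrow> xs \<noteq> [] \<Longrightarrow> E (last xs) y"
proof (induction xs)
  case Nil then show ?case by simp
next
  case (Cons x xs)
  show ?case
  proof (cases "xs = []")
    case True then show ?thesis using Cons.prems by (simp add: is_path_Cons)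
  next
    case False
    then show ?thesis using Cons by (auto simp: is_path_Cons)
  qed
qed

lemma is_path_snoc:
  "is_path S E xs \<Longrightarrow> z \<in> S \<Longrightarrow> z \<notin> set xs \<Longrightarrow> E (last xs) z \<Longrightarrow> is_path S E (xs @ [z])"
proof (induction xs)
  case Nil then show ?case by (simp add: is_path_def)
next
  case (Cons x xs)
  show ?case
  proof (cases "xs = []")
    case True then show ?thesis using Cons.prems by (simp add: is_path_Cons)
  next
    case False
    then show ?thesis using Cons by (auto simp: is_path_Cons)
  qed
qed

lemma is_path_set: "is_path S E xs \<Longrightarrow> set xs \<subseteq> S"
  by (simp add: is_path_def)

lemma is_path_distinct: "is_path S E xs \<Longrightarrow> distinct xs"
  by (simp add: is_path_def)

lemma is_path_nonempty: "is_path S E xs \<Longrightarrow> xs \<noteq> []"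
  by (simp add: is_path_def)

lemma is_path_mono_rel:
  assumes "is_path S E xs" "\<And>p q. p \<in> set xs \<Longrightarrow> q \<in> set xs \<Longrightarrow> E p q \<Longrightarrow> E' p q"
  shows "is_path S E' xs"
  using assms unfolding is_path_def by (meson nth_mem Suc_lessD)

lemma path_walk:
  "is_path S E xs \<Longrightarrow> (induced_adj E S)\<^sup>*\<^sup>* (hd xs) (last xs)"
proof (induction xs)
  case Nil then show ?case by (simp add: is_path_def)
next
  case (Cons x xs)
  show ?case
  proof (cases "xs = []")
    case True then show ?thesis by simp
  next
    case False
    then have "is_path S E xs" "x \<in> S" "E x (hd xs)" using Cons.prems by (auto simp: is_path_Cons)
    moreover have "hd xs \<in> S" using \<open>is_path S E xs\<close> False
      by (metis hd_in_set is_path_set subsetD)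
    ultimately show ?thesis using Cons.IH False
      by (auto intro: converse_rtranclp_into_rtranclp)
  qed
qed

lemma walk_path:
  assumes "(induced_adj E S)\<^sup>*\<^sup>* x y" "x \<in> S"
  shows "\<exists>xs. is_path S E xs \<and> hd xs = x \<and> last xs = y"
  using assms(1)
proof (induction rule: rtranclp_induct)
  case base
  then show ?case using assms(2) by (intro exI[of _ "[x]"]) simp
next
  case (step y z)
  then obtain xs where xs: "is_path S E xs" "hd xs = x" "last xs = y" by blast
  show ?case
  proof (cases "z \<in> set xs")
    case True
    then obtain as bs where sp: "xs = as @ z # bs" by (meson split_list)
    have "is_path S E (as @ [z])" using xs(1) sp is_path_append_left[of S E "as @ [z]" bs] by simp
    moreover have "hd (as @ [z]) = x" using xs(2) sp by (cases as) auto
    ultimately show ?thesis by force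
  next
    case False
    have "xs \<noteq> []" using xs(1) is_path_nonempty by auto
    then have "is_path S E (xs @ [z])" using is_path_snoc[OF xs(1)] step False xs(3) by auto
    moreover have "hd (xs @ [z]) = x" using xs(2) \<open>xs \<noteq> []\<close> by simp
    ultimately show ?thesis by force
  qed
qed

lemma induced_adj_rtranclp_sym:
  assumes "\<And>a b. E a b \<Longrightarrow> E b a" "(induced_adj E S)\<^sup>*\<^sup>* x y"
  shows "(induced_adj E S)\<^sup>*\<^sup>* y x"
proof -
  have "symp (induced_adj E S)" using assms(1) by (auto intro: sympI)
  then show ?thesis using assms(2) by (blast dest: sympD[OF symp_rtranclp])
qed

lemma finite_paths: "finite S \<Longrightarrow> finite {xs. is_path S E xs}"
  by (rule finite_subset[OF _ finite_subset_distinct[of S]]) (auto simp: is_path_def)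

lemma rtranclp_exits_set:
  assumes "r\<^sup>*\<^sup>* x b" "x \<in> A" "b \<notin> A"
  shows "\<exists>a c. a \<in> A \<and> c \<notin> A \<and> r a c"
  using assms by (induction rule: rtranclp_induct) auto

lemma edges_finite:
  assumes "sym_graph V E" "finite V"
  shows "finite (edges E)"
proof -
  have "edges E \<subseteq> Pow V" using assms(1) unfolding edges_def sym_graph_def by auto
  then show ?thesis using assms(2) by (meson finite_Pow_iff finite_subset)
qed

lemma card_le_card_edges_Suc:
  assumes sg: "sym_graph V E" and fin: "finite V" and con: "induces_connected E V"
  shows "card V \<le> card (edges E) + 1"
proof -
  obtain x where x: "x \<in> V" using con unfolding induces_connected_def by auto
  have fe: "finite (edges E)" using edges_finite sg fin by blast
  have main: "n < card V \<Longrightarrow> \<exists>A. x \<in> A \<and> A \<subseteq> V \<and> card A = Suc n \<and> n \<le> card {e \<in> edges E. e \<subseteq> A}" for n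
  proof (induction n)
    case 0
    then show ?case using x by (intro exI[of _ "{x}"]) auto
  next
    case (Suc n)
    then obtain A where A: "x \<in> A" "A \<subseteq> V" "card A = Suc n" "n \<le> card {e \<in> edges E. e \<subseteq> A}" by auto
    have "A \<noteq> V" using A(3) Suc.prems by auto
    then obtain b where b: "b \<in> V" "b \<notin> A" using A(2) by auto
    have "(induced_adj E V)\<^sup>*\<^sup>* x b" using con x b unfolding induces_connected_def by blast
    then obtain a c where ac: "a \<in> A" "c \<notin> A" "induced_adj E V a c" using rtranclp_exits_set[of "induced_adj E V" x b A] A(1) b(2) by blast
    define A' where "A' = insert c A"
    have fA: "finite A" using A(2) fin finite_subset by auto
    have cA': "card A' = Suc (Suc n)" using A(3) ac(2) fA by (simp add: A'_def)
    have ed: "{a, c} \<in> edges E" using ac(3) unfolding edges_def by auto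
    have sub: "insert {a, c} {e \<in> edges E. e \<subseteq> A} \<subseteq> {e \<in> edges E. e \<subseteq> A'}"
      using ed ac(1) unfolding A'_def by auto
    have nin: "{a, c} \<notin> {e \<in> edges E. e \<subseteq> A}" using ac(2) by auto
    have "card (insert {a, c} {e \<in> edges E. e \<subseteq> A}) \<le> card {e \<in> edges E. e \<subseteq> A'}"
      by (rule card_mono) (use fe sub in auto)
    then have "Suc (card {e \<in> edges E. e \<subseteq> A}) \<le> card {e \<in> edges E. e \<subseteq> A'}"
      using nin fe by simp
    then show ?case using A cA' ac unfolding A'_def by (intro exI[of _ "insert c A"]) auto
  qed
  have "card V \<noteq> 0" using x fin by auto
  then obtain A where A: "A \<subseteq> V" "card (V) - 1 \<le> card {e \<in> edges E. e \<subseteq> A}"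
    using main[of "card V - 1"] by auto
  have "card {e \<in> edges E. e \<subseteq> A} \<le> card (edges E)" using fe by (intro card_mono) auto
  then show ?thesis using A by linarith
qed

lemma tree_sym: "is_tree V E \<Longrightarrow> E a b \<Longrightarrow> E b a \<and> a \<noteq> b \<and> a \<in> V \<and> b \<in> V"
  by (simp add: is_tree_def sym_graph_def)

lemma sym_graph_delete_edge:
  assumes "sym_graph V E"
  shows "sym_graph V (\<lambda>p q. E p q \<and> {p, q} \<noteq> {x, a})"
  using assms unfolding sym_graph_def by (metis insert_commute)

lemma card_edges_delete_edge:
  assumes "sym_graph V E" "finite V" "E x a"
  shows "card (edges (\<lambda>p q. E p q \<and> {p, q} \<noteq> {x, a})) = card (edges E) - 1"
proof -
  have "edges (\<lambda>p q. E p q \<and> {p, q} \<noteq> {x, a}) = edges E - {{x, a}}"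
    unfolding edges_def by blast
  moreover have "{x, a} \<in> edges E" using assms(3) unfolding edges_def by auto
  ultimately show ?thesis using edges_finite[OF assms(1,2)] by simp
qed

lemma connected_delete_edge:
  assumes con: "induces_connected E V"
    and sub: "\<And>p q. E p q \<Longrightarrow> {p, q} \<noteq> {x, a} \<Longrightarrow> E' p q"
    and xa: "(induced_adj E' V)\<^sup>*\<^sup>* x a" "(induced_adj E' V)\<^sup>*\<^sup>* a x"
  shows "induces_connected E' V"
  unfolding induces_connected_def
proof (intro conjI ballI)
  show "V \<noteq> {}" using con by (simp add: induces_connected_def)
  fix p q assume "p \<in> V" "q \<in> V"
  then have "(induced_adj E V)\<^sup>*\<^sup>* p q" using con by (simp add: induces_connected_def)
  then show "(induced_adj E' V)\<^sup>*\<^sup>* p q"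
  proof (induction rule: rtranclp_induct)
    case (step y z)
    show ?case
    proof (cases "{y, z} = {x, a}")
      case True
      then have "(induced_adj E' V)\<^sup>*\<^sup>* y z" using xa by (auto simp: doubleton_eq_iff)
      with step.IH show ?thesis by (rule rtranclp_trans)
    next
      case False
      then have "induced_adj E' V y z" using step.hyps(2) sub by blast
      with step.IH show ?thesis by (rule rtranclp.rtrancl_into_rtrancl)
    qed
  qed simp
qed

text \<open>Two paths leaving \<open>x\<close> through different neighbours and meeting again close a cycle, so
  the first edge could be deleted without disconnecting the tree, leaving too few edges.\<close>

lemma tree_no_two_branches:
  assumes T: "is_tree V E"
    and p1: "is_path V E (x # a # as)" and p2: "is_path V E (x # b # bs)"
    and ab: "a \<noteq> b" and l: "last (a # as) = last (b # bs)"
  shows False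
proof -
  have fin: "finite V" and sg: "sym_graph V E" and con: "induces_connected E V"
    and ce: "card (edges E) = card V - 1" using T by (auto simp: is_tree_def)
  define E' where "E' = (\<lambda>p q. E p q \<and> {p, q} \<noteq> {x, a})"
  have sg': "sym_graph V E'" using sym_graph_delete_edge[OF sg] by (simp add: E'_def)
  have Exa: "E x a" and Exb: "E x b" using p1 p2 by (simp_all add: is_path_Cons)
  have avoid: "is_path V E' ys" if "is_path V E ys" "x \<notin> set ys" for ys
    by (rule is_path_mono_rel[OF that(1)]) (use that(2) in \<open>auto simp: E'_def doubleton_eq_iff\<close>)
  have pa': "is_path V E' (a # as)" and pb': "is_path V E' (b # bs)"
    using avoid p1 p2 is_path_Cons[of V E x "a # as"] is_path_Cons[of V E x "b # bs"] by auto
  have bx: "induced_adj E' V b x"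
    using tree_sym[OF T Exb] ab by (auto simp: E'_def doubleton_eq_iff)
  have "(induced_adj E' V)\<^sup>*\<^sup>* a (last (b # bs))" using path_walk[OF pa'] l by simp
  also have "(induced_adj E' V)\<^sup>*\<^sup>* (last (b # bs)) b"
    using induced_adj_rtranclp_sym[OF _ path_walk[OF pb']] sg' by (auto simp: sym_graph_def)
  finally have wax: "(induced_adj E' V)\<^sup>*\<^sup>* a x" using bx by (rule rtranclp.rtrancl_into_rtrancl)
  have wxa: "(induced_adj E' V)\<^sup>*\<^sup>* x a"
    using induced_adj_rtranclp_sym[OF _ wax] sg' by (auto simp: sym_graph_def)
  have "induces_connected E' V"
    by (rule connected_delete_edge[OF con _ wxa wax]) (simp add: E'_def)
  then have "card V \<le> card (edges E') + 1" using card_le_card_edges_Suc[OF sg' fin] by blast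
  moreover have "card (edges E') = card (edges E) - 1"
    using card_edges_delete_edge[OF sg fin Exa] by (simp add: E'_def)
  moreover have "card {x, a} \<le> card V" using tree_sym[OF T Exa] fin by (intro card_mono) auto
  ultimately show False using ce tree_sym[OF T Exa] by simp
qed

lemma tree_path_unique:
  assumes T: "is_tree V E"
  shows "is_path V E xs \<Longrightarrow> is_path V E ys \<Longrightarrow> hd xs = hd ys \<Longrightarrow> last xs = last ys \<Longrightarrow> xs = ys"
proof (induction xs arbitrary: ys)
  case Nil then show ?case by (simp add: is_path_def)
next
  case (Cons x xs)
  obtain y ys' where ys: "ys = y # ys'" using Cons.prems(2) by (cases ys) (auto simp: is_path_def)
  have xy: "x = y" using Cons.prems(3) ys by simp
  show ?case
  proof (cases "xs = []")
    case True
    then have "last ys = x" using Cons.prems(4) by simp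
    then have "ys' = []" using Cons.prems(2) ys xy
      by (metis distinct.simps(2) is_path_distinct last.simps last_in_set)
    then show ?thesis using ys xy True by simp
  next
    case False
    show ?thesis
    proof (cases "ys' = []")
      case True
      then have "last (x # xs) = x" using Cons.prems(4) ys xy by simp
      then show ?thesis using Cons.prems(1) False
        by (metis distinct.simps(2) is_path_distinct last.simps last_in_set)
    next
      case False2: False
      obtain a as where xs: "xs = a # as" using False by (cases xs) auto
      obtain b bs where ys': "ys' = b # bs" using False2 by (cases ys') auto
      show ?thesis
      proof (cases "a = b")
        case True
        have "is_path V E xs" "is_path V E ys'" using Cons.prems(1,2) xs ys ys' by (auto simp: is_path_Cons)
        moreover have "last xs = last ys'" using Cons.prems(4) xs ys ys' by simp
        moreover have "hd xs = hd ys'" using True xs ys' by simp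
        ultimately have "xs = ys'" using Cons.IH by blast
        then show ?thesis using ys xy by simp
      next
        case False
        have "last (a # as) = last (b # bs)" using Cons.prems(4) xs ys ys' by simp
        then show ?thesis using tree_no_two_branches[OF T, of x a as b bs] Cons.prems(1,2) xs ys ys' xy False
          by simp
      qed
    qed
  qed
qed

lemma tree_path_exists:
  assumes T: "is_tree V E" and "x \<in> V" "y \<in> V"
  shows "\<exists>xs. is_path V E xs \<and> hd xs = x \<and> last xs = y"
proof -
  have "induces_connected E V" using T by (simp add: is_tree_def)
  then have "(induced_adj E V)\<^sup>*\<^sup>* x y" using assms(2,3) unfolding induces_connected_def by simp
  then show ?thesis using walk_path[OF _ assms(2)] by simp
qed

locale rooted_tree =
  fixes V :: "'a set" and E :: "'a \<Rightarrow> 'a \<Rightarrow> bool" and v :: 'a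
  assumes T: "is_tree V E" and vV: "v \<in> V"
begin

abbreviation "par w \<equiv> parent V E v w"
abbreviation "rk w \<equiv> rank V E v w"

lemma adj_sym: "E a b \<Longrightarrow> E b a" and adj_irrefl: "E a b \<Longrightarrow> a \<noteq> b"
  and adj_in_V1: "E a b \<Longrightarrow> a \<in> V" and adj_in_V2: "E a b \<Longrightarrow> b \<in> V"
  using tree_sym[OF T] by blast+

lemma finite_V: "finite V" using T by (simp add: is_tree_def)

definition root_path :: "'a \<Rightarrow> 'a list" where
  "root_path z = (THE xs. is_path V E xs \<and> hd xs = v \<and> last xs = z)"

lemma root_path: assumes "z \<in> V" shows "is_path V E (root_path z)" "hd (root_path z) = v" "last (root_path z) = z"
proof -
  obtain xs where xs: "is_path V E xs" "hd xs = v" "last xs = z"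
    using tree_path_exists[OF T vV assms] by (elim exE conjE) simp
  have "root_path z = xs" unfolding root_path_def
  proof (rule the_equality)
    show "is_path V E xs \<and> hd xs = v \<and> last xs = z" using xs by simp
  next
    fix ys assume "is_path V E ys \<and> hd ys = v \<and> last ys = z"
    then show "ys = xs" using tree_path_unique[OF T, of ys xs] xs by simp
  qed
  then show "is_path V E (root_path z)" "hd (root_path z) = v" "last (root_path z) = z" using xs by auto
qed

lemma root_path_ne: "z \<in> V \<Longrightarrow> root_path z \<noteq> []"
  using root_path(1) is_path_nonempty by blast

lemma root_path_eq: assumes "is_path V E xs" "hd xs = v" shows "root_path (last xs) = xs"
proof -
  have ne: "xs \<noteq> []" using is_path_nonempty[OF assms(1)] .
  have l: "last xs \<in> V" using is_path_set[OF assms(1)] last_in_set[OF ne] by blast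
  have "root_path (last xs) = xs" using tree_path_unique[OF T root_path(1)[OF l] assms(1)] root_path(2,3)[OF l] assms(2) by simp
  then show ?thesis .
qed

lemma root_path_v: "root_path v = [v]"
  using root_path_eq[of "[v]"] vV by simp

lemma last_in_root_path: assumes "z \<in> V" shows "z \<in> set (root_path z)"
proof -
  have "last (root_path z) \<in> set (root_path z)" using root_path_ne[OF assms] by (rule last_in_set)
  then show ?thesis using root_path(3)[OF assms] by simp
qed

lemma root_path_prefix: assumes "z \<in> V" "root_path z = xs @ ys" "xs \<noteq> []" shows "root_path (last xs) = xs"
proof -
  have "is_path V E (xs @ ys)" using root_path(1)[OF assms(1)] assms(2) by simp
  then have "is_path V E xs" using is_path_append_left assms(3) by blast
  moreover have "hd xs = v" using root_path(2)[OF assms(1)] assms(2,3) by simp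
  ultimately show ?thesis by (rule root_path_eq)
qed

lemma root_path_mem: assumes "z \<in> V" "u \<in> set (root_path z)" shows "\<exists>ys. root_path z = root_path u @ ys"
proof -
  obtain as bs where sp: "root_path z = as @ u # bs" using assms(2) by (meson split_list)
  have "root_path u = as @ [u]" using root_path_prefix[OF assms(1), of "as @ [u]" bs] sp by simp
  then show ?thesis using sp by simp
qed

lemma root_path_adj_cases: assumes "E a b" shows "root_path b = root_path a @ [b] \<or> root_path a = root_path b @ [a]"
proof -
  have aV: "a \<in> V" and bV: "b \<in> V" using adj_in_V1 adj_in_V2 assms by auto
  show ?thesis
  proof (cases "b \<in> set (root_path a)")
    case False
    have "is_path V E (root_path a @ [b])"
      using is_path_snoc[OF root_path(1)[OF aV] bV False] root_path(3)[OF aV] assms by simp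
    moreover have "hd (root_path a @ [b]) = v" using root_path(2)[OF aV] root_path_ne[OF aV] by simp
    ultimately have "root_path (last (root_path a @ [b])) = root_path a @ [b]" by (rule root_path_eq)
    then show ?thesis by simp
  next
    case True
    then obtain ys where ys: "root_path a = root_path b @ ys" using root_path_mem aV by blast
    have "ys \<noteq> []" using ys root_path(3)[OF aV] root_path(3)[OF bV] adj_irrefl[OF assms] by auto
    then have "a \<in> set ys" using ys root_path(3)[OF aV] by (metis last_appendR last_in_set)
    then have "a \<notin> set (root_path b)" using ys is_path_distinct[OF root_path(1)[OF aV]] by auto
    then have "is_path V E (root_path b @ [a])"
      using is_path_snoc[OF root_path(1)[OF bV] aV] root_path(3)[OF bV] adj_sym[OF assms] by simp
    moreover have "hd (root_path b @ [a]) = v" using root_path(2)[OF bV] root_path_ne[OF bV] by simp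
    ultimately have "root_path (last (root_path b @ [a])) = root_path b @ [a]" by (rule root_path_eq)
    then show ?thesis by simp
  qed
qed

lemma root_path_inj: assumes "a \<in> V" "b \<in> V" "root_path a = root_path b" shows "a = b"
proof -
  have "last (root_path a) = last (root_path b)" using assms(3) by simp
  then show ?thesis using root_path(3)[OF assms(1)] root_path(3)[OF assms(2)] by simp
qed

lemma parent_props: assumes "w \<in> V" "w \<noteq> v"
  shows "root_path w = root_path (par w) @ [w]" "E (par w) w" "par w \<in> V"
proof -
  have ne: "root_path w \<noteq> []" using root_path_ne[OF assms(1)] .
  obtain zs where zs: "root_path w = zs @ [w]"
  proof
    show "root_path w = butlast (root_path w) @ [w]" using append_butlast_last_id[OF ne] root_path(3)[OF assms(1)] by simp
  qed
  have zsne: "zs \<noteq> []" using zs root_path(2)[OF assms(1)] assms(2) by auto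
  obtain ys p where ysp: "zs = ys @ [p]"
  proof
    show "zs = butlast zs @ [last zs]" using append_butlast_last_id[OF zsne] by simp
  qed
  have pw: "root_path w = ys @ [p, w]" using zs ysp by simp
  have P: "is_path V E (ys @ [p, w])" "hd (ys @ [p, w]) = v" using root_path(1,2)[OF assms(1)] pw by auto
  have "par w = p"
    unfolding parent_def
  proof (rule the_equality)
    show "\<exists>xs. is_path V E (xs @ [p, w]) \<and> hd (xs @ [p, w]) = v" using P by blast
  next
    fix u assume "\<exists>xs. is_path V E (xs @ [u, w]) \<and> hd (xs @ [u, w]) = v"
    then obtain xs where xs: "is_path V E (xs @ [u, w])" "hd (xs @ [u, w]) = v" by blast
    have "root_path (last (xs @ [u, w])) = xs @ [u, w]" using xs by (rule root_path_eq)
    then have "ys @ [p, w] = xs @ [u, w]" using pw by simp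
    then have "last (butlast (ys @ [p, w])) = last (butlast (xs @ [u, w]))" by simp
    then show "u = p" by (simp add: butlast_append)
  qed
  moreover have "root_path p = ys @ [p]" using root_path_prefix[OF assms(1), of "ys @ [p]" "[w]"] pw by simp
  ultimately show "root_path w = root_path (par w) @ [w]" using pw by simp
  have "E (last (ys @ [p])) w" using is_path_append_edge[of V E "ys @ [p]" w "[]"] P(1) by simp
  then show "E (par w) w" using \<open>par w = p\<close> by simp
  then show "par w \<in> V" using adj_in_V1 by blast
qed

definition children :: "'a \<Rightarrow> 'a set" where
  "children w = {u. E w u \<and> root_path u = root_path w @ [u]}"

definition desc :: "'a \<Rightarrow> 'a set" where
  "desc w = {z \<in> V. w \<in> set (root_path z)}"

lemma child_props: assumes "u \<in> children w" shows "u \<in> V" "E w u" "root_path u = root_path w @ [u]" "u \<noteq> v" "w \<in> V"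
proof -
  show E: "E w u" and p: "root_path u = root_path w @ [u]" using assms by (auto simp: children_def)
  show uV: "u \<in> V" and wV: "w \<in> V" using adj_in_V1[OF E] adj_in_V2[OF E] by auto
  show "u \<noteq> v"
  proof
    assume "u = v"
    then have "root_path v = root_path w @ [v]" using p by simp
    then show False using root_path_v root_path_ne[OF wV] by simp
  qed
qed

lemma children_finite: "finite (children w)"
proof (rule finite_subset[OF _ finite_V])
  show "children w \<subseteq> V" using child_props(1) by blast
qed

lemma parent_child: assumes "u \<in> children w" shows "par u = w"
proof -
  have uV: "u \<in> V" and uv: "u \<noteq> v" and wV: "w \<in> V" using child_props[OF assms] by auto
  have "root_path u = root_path (par u) @ [u]" using parent_props(1)[OF uV uv] .
  then have "root_path (par u) = root_path w" using child_props(3)[OF assms] by simp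
  then show ?thesis using root_path_inj[OF parent_props(3)[OF uV uv] wV] by simp
qed

lemma parent_notin_children: assumes "w \<in> V" "w \<noteq> v" shows "par w \<notin> children w"
proof
  assume "par w \<in> children w"
  then have "root_path (par w) = root_path w @ [par w]" using child_props(3) by blast
  moreover have "root_path w = root_path (par w) @ [w]" using parent_props(1)[OF assms] .
  ultimately have "length (root_path (par w)) = Suc (length (root_path w))" "length (root_path w) = Suc (length (root_path (par w)))"
    by simp_all
  then show False by simp
qed

lemma neighbours_eq: assumes "w \<in> V"
  shows "{u. E w u} = children w \<union> (if w = v then {} else {par w})"
proof (intro set_eqI iffI)
  fix u assume "u \<in> {u. E w u}"
  then have E: "E w u" by simp
  show "u \<in> children w \<union> (if w = v then {} else {par w})"
  proof (cases "root_path u = root_path w @ [u]")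
    case True then show ?thesis using E by (simp add: children_def)
  next
    case False
    then have pw: "root_path w = root_path u @ [w]" using root_path_adj_cases[OF E] by blast
    have uV: "u \<in> V" using adj_in_V2 E by blast
    have wv: "w \<noteq> v"
    proof
      assume "w = v"
      then have "[v] = root_path u @ [v]" using pw root_path_v by simp
      then show False using root_path_ne[OF uV] by simp
    qed
    have "root_path u = root_path (par w)" using parent_props(1)[OF assms wv] pw by simp
    then have "u = par w" using root_path_inj[OF uV parent_props(3)[OF assms wv]] by simp
    then show ?thesis using wv by simp
  qed
next
  fix u assume u: "u \<in> children w \<union> (if w = v then {} else {par w})"
  show "u \<in> {u. E w u}"
  proof (cases "u \<in> children w")
    case True then show ?thesis using child_props(2) by blast
  next
    case False
    then have "w \<noteq> v" "u = par w" using u by (auto split: if_splits)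
    then show ?thesis using adj_sym[OF parent_props(2)[OF assms]] by simp
  qed
qed

lemma degree_eq: assumes "w \<in> V"
  shows "degree E w = card (children w) + (if w = v then 0 else 1)"
proof (cases "w = v")
  case True then show ?thesis using neighbours_eq[OF assms] by (simp add: degree_def)
next
  case False
  have "degree E w = card (children w \<union> {par w})" using neighbours_eq[OF assms] False by (simp add: degree_def)
  also have "\<dots> = card (children w) + 1" using parent_notin_children[OF assms False] children_finite by simp
  finally show ?thesis using False by simp
qed

lemma desc_self: "w \<in> V \<Longrightarrow> w \<in> desc w"
  using last_in_root_path by (simp add: desc_def)

lemma desc_subset: "desc w \<subseteq> V" by (auto simp: desc_def)

lemma desc_finite: "finite (desc w)" using desc_subset finite_V finite_subset by blast

lemma desc_root: "desc v = V"
proof (intro set_eqI iffI)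
  fix z assume "z \<in> V"
  then have "hd (root_path z) \<in> set (root_path z)" using root_path_ne hd_in_set by blast
  then show "z \<in> desc v" using root_path(2) \<open>z \<in> V\<close> by (simp add: desc_def)
qed (simp add: desc_def)

lemma desc_child_subset: assumes "u \<in> children w" shows "desc u \<subseteq> desc w"
proof
  fix z assume "z \<in> desc u"
  then have z: "z \<in> V" "u \<in> set (root_path z)" by (auto simp: desc_def)
  obtain ys where "root_path z = root_path u @ ys" using root_path_mem z by blast
  then have "root_path z = root_path w @ [u] @ ys" using child_props(3)[OF assms] by simp
  moreover have "w \<in> set (root_path w)" using last_in_root_path child_props(5)[OF assms] by blast
  ultimately show "z \<in> desc w" using z by (simp add: desc_def)
qed

lemma parent_notin_desc_child: assumes "u \<in> children w" shows "w \<notin> desc u"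
proof
  assume "w \<in> desc u"
  then have "u \<in> set (root_path w)" by (simp add: desc_def)
  moreover have "distinct (root_path u)" using is_path_distinct root_path(1) child_props(1)[OF assms] by blast
  ultimately show False using child_props(3)[OF assms] by simp
qed

lemma desc_decomp: assumes "w \<in> V" shows "desc w = insert w (\<Union>u\<in>children w. desc u)"
proof (intro set_eqI iffI)
  fix z assume z: "z \<in> desc w"
  show "z \<in> insert w (\<Union>u\<in>children w. desc u)"
  proof (cases "z = w")
    case True then show ?thesis by simp
  next
    case False
    have zV: "z \<in> V" "w \<in> set (root_path z)" using z unfolding desc_def by simp_all
    obtain ys where ys: "root_path z = root_path w @ ys" using root_path_mem[OF zV(1,2)] by (elim exE)
    have "ys \<noteq> []"
    proof
      assume "ys = []"
      then have "root_path z = root_path w" using ys by simp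
      then show False using root_path_inj[OF zV(1) assms] False by simp
    qed
    then obtain u ys' where u: "ys = u # ys'" by (cases ys) auto
    have pu: "root_path u = root_path w @ [u]"
      using root_path_prefix[OF zV(1), of "root_path w @ [u]" ys'] ys u by simp
    have "is_path V E (root_path w @ u # ys')" using root_path(1)[OF zV(1)] ys u by simp
    then have "E (last (root_path w)) u" using is_path_append_edge[of V E "root_path w" u ys'] root_path_ne[OF assms] by simp
    then have "u \<in> children w" using pu root_path(3)[OF assms] by (simp add: children_def)
    moreover have "z \<in> desc u" using zV ys u by (simp add: desc_def)
    ultimately show ?thesis by blast
  qed
next
  fix z assume z: "z \<in> insert w (\<Union>u\<in>children w. desc u)"
  show "z \<in> desc w"
  proof (cases "z = w")
    case True then show ?thesis using desc_self[OF assms] by simp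
  next
    case False
    then obtain u where "u \<in> children w" "z \<in> desc u" using z by blast
    then show ?thesis using desc_child_subset by blast
  qed
qed

lemma desc_disj: assumes "u1 \<in> children w" "u2 \<in> children w" "u1 \<noteq> u2" shows "desc u1 \<inter> desc u2 = {}"
proof (rule ccontr)
  assume "desc u1 \<inter> desc u2 \<noteq> {}"
  then obtain z where z: "z \<in> desc u1" "z \<in> desc u2" by blast
  have zV: "z \<in> V" "u1 \<in> set (root_path z)" "u2 \<in> set (root_path z)" using z by (auto simp: desc_def)
  obtain ys1 where y1: "root_path z = root_path u1 @ ys1" using root_path_mem zV(1,2) by blast
  obtain ys2 where y2: "root_path z = root_path u2 @ ys2" using root_path_mem zV(1,3) by blast
  have "root_path w @ u1 # ys1 = root_path w @ u2 # ys2" using y1 y2 child_props(3)[OF assms(1)] child_props(3)[OF assms(2)] by simp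
  then show False using assms(3) by simp
qed

lemma desc_cross: assumes "a \<in> desc u" "b \<notin> desc u" "E a b"
  shows "a = u \<and> root_path u = root_path b @ [u]"
proof -
  have aV: "a \<in> V" "u \<in> set (root_path a)" using assms(1) by (auto simp: desc_def)
  have bV: "b \<in> V" using adj_in_V2 assms(3) by blast
  have nb: "u \<notin> set (root_path b)" using assms(2) bV by (simp add: desc_def)
  show ?thesis
  proof (cases "root_path b = root_path a @ [b]")
    case True then show ?thesis using aV nb by simp
  next
    case False
    then have pa: "root_path a = root_path b @ [a]" using root_path_adj_cases[OF assms(3)] by blast
    then have "u = a" using aV nb by simp
    then show ?thesis using pa by simp
  qed
qed

lemma branches_cross_edge: assumes "u \<in> children w" "K \<subseteq> children w" "u \<notin> K"
  and "a \<in> insert w (\<Union>u'\<in>K. desc u')" "b \<in> desc u" "E a b"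
  shows "a = w \<and> b = u"
proof -
  have wV: "w \<in> V" using child_props(5)[OF assms(1)] .
  have aV: "a \<in> V" using adj_in_V1 assms(6) by blast
  have "a \<notin> desc u"
  proof
    assume aD: "a \<in> desc u"
    show False
    proof (cases "a = w")
      case True then show False using aD parent_notin_desc_child[OF assms(1)] by simp
    next
      case False
      then obtain u' where u': "u' \<in> K" "a \<in> desc u'" using assms(4) by blast
      have "u' \<noteq> u" using u'(1) assms(3) by blast
      then have "desc u \<inter> desc u' = {}" using desc_disj[OF assms(1), of u'] assms(2) u'(1) by blast
      then show False using aD u'(2) by blast
    qed
  qed
  then have bu: "b = u \<and> root_path u = root_path a @ [u]" using desc_cross[OF assms(5) _ adj_sym[OF assms(6)]] by blast
  then have "root_path a = root_path w" using child_props(3)[OF assms(1)] by simp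
  then show ?thesis using root_path_inj[OF aV wV] bu by simp
qed

lemma path_in_desc:
  "p \<in> V \<Longrightarrow> root_path w = root_path p @ [w] \<Longrightarrow> is_path V E xs \<Longrightarrow> hd xs = w \<Longrightarrow> p \<notin> set xs \<Longrightarrow> set xs \<subseteq> desc w"
proof (induction xs arbitrary: w p)
  case Nil then show ?case by simp
next
  case (Cons x xs)
  have xw: "x = w" using Cons.prems(4) by simp
  have wV: "w \<in> V" using Cons.prems(3) xw by (simp add: is_path_Cons)
  show ?case
  proof (cases "xs = []")
    case True then show ?thesis using xw desc_self[OF wV] by simp
  next
    case False
    obtain u ys where u: "xs = u # ys" using False by (cases xs) auto
    have Ewu: "E w u" and pxs: "is_path V E xs" and wn: "w \<notin> set xs"
      using Cons.prems(3) xw u by (auto simp: is_path_Cons)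
    have up: "u \<noteq> p" using Cons.prems(5) u by auto
    have uV: "u \<in> V" using adj_in_V2 Ewu by blast
    have pu: "root_path u = root_path w @ [u]"
    proof (rule ccontr)
      assume "root_path u \<noteq> root_path w @ [u]"
      then have "root_path w = root_path u @ [w]" using root_path_adj_cases[OF Ewu] by blast
      then have "root_path u = root_path p" using Cons.prems(2) by simp
      then show False using root_path_inj[OF uV Cons.prems(1)] up by simp
    qed
    have "set xs \<subseteq> desc u" using Cons.IH[OF wV pu pxs _ wn] u by simp
    moreover have "u \<in> children w" using Ewu pu by (simp add: children_def)
    ultimately show ?thesis using desc_child_subset xw desc_self[OF wV] by auto
  qed
qed

lemma parent_notin_desc: assumes "w \<in> V" "w \<noteq> v" shows "par w \<notin> desc w"
proof
  assume "par w \<in> desc w"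
  then have "w \<in> set (root_path (par w))" by (simp add: desc_def)
  moreover have "distinct (root_path w)" using is_path_distinct root_path(1)[OF assms(1)] by blast
  ultimately show False using parent_props(1)[OF assms] by simp
qed

lemma rank_set_finite: "finite {length xs - 1 |xs. is_path V E xs \<and> hd xs = w \<and> par w \<notin> set xs}"
proof -
  have "finite {xs. is_path V E xs \<and> hd xs = w \<and> par w \<notin> set xs}"
    by (rule finite_subset[OF _ finite_paths[OF finite_V]]) blast
  then show ?thesis by (rule finite_image_set)
qed

lemma rank_ge: assumes "is_path V E xs" "hd xs = w" "par w \<notin> set xs"
  shows "length xs - 1 \<le> rk w"
proof -
  have "length xs - 1 \<in> {length xs - 1 |xs. is_path V E xs \<and> hd xs = w \<and> par w \<notin> set xs}"
    using assms by blast
  then show ?thesis unfolding rank_def using rank_set_finite by (rule Max_ge[rotated])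
qed

lemma parent_neq: assumes "w \<in> V" "w \<noteq> v" shows "par w \<noteq> w"
  using adj_irrefl[OF parent_props(2)[OF assms]] .

lemma rank_attained: assumes "w \<in> V" "w \<noteq> v"
  shows "\<exists>xs. is_path V E xs \<and> hd xs = w \<and> par w \<notin> set xs \<and> rk w = length xs - 1"
proof -
  have "[w] \<in> {xs. is_path V E xs \<and> hd xs = w \<and> par w \<notin> set xs}"
    using assms parent_neq[OF assms] by simp
  then have ne: "{length xs - 1 |xs. is_path V E xs \<and> hd xs = w \<and> par w \<notin> set xs} \<noteq> {}" by blast
  have "rk w \<in> {length xs - 1 |xs. is_path V E xs \<and> hd xs = w \<and> par w \<notin> set xs}"
    unfolding rank_def using rank_set_finite ne by (rule Max_in)
  then show ?thesis by blast
qed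

lemma rank_less_card: assumes "w \<in> V" "w \<noteq> v" shows "rk w < card V"
proof -
  obtain xs where xs: "is_path V E xs" "rk w = length xs - 1" using rank_attained[OF assms] by blast
  have "length xs = card (set xs)" using distinct_card[OF is_path_distinct[OF xs(1)]] by simp
  also have "\<dots> \<le> card V" using is_path_set[OF xs(1)] finite_V by (rule card_mono[rotated])
  finally have "length xs \<le> card V" .
  moreover have "length xs \<ge> 1" using is_path_nonempty[OF xs(1)] by (cases xs) auto
  ultimately show ?thesis using xs(2) by linarith
qed

lemma rank_child_less: assumes "u \<in> children w" "w \<noteq> v" shows "rk u + 1 \<le> rk w"
proof -
  have uV: "u \<in> V" and uv: "u \<noteq> v" and wV: "w \<in> V" and Ewu: "E w u" using child_props[OF assms(1)] by auto
  obtain xs where xs: "is_path V E xs" "hd xs = u" "par u \<notin> set xs" "rk u = length xs - 1"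
    using rank_attained[OF uV uv] by blast
  have pu: "par u = w" using parent_child[OF assms(1)] .
  have sD: "set xs \<subseteq> desc u" using path_in_desc[OF parent_props(3)[OF uV uv] parent_props(1)[OF uV uv] xs(1,2,3)] .
  have ne: "xs \<noteq> []" using is_path_nonempty[OF xs(1)] .
  have wn: "w \<notin> set xs" using sD parent_notin_desc_child[OF assms(1)] by blast
  have p2: "is_path V E (w # xs)" using wV ne xs(1) wn Ewu xs(2) by (simp add: is_path_Cons)
  have "par w \<notin> desc w" using parent_notin_desc[OF wV assms(2)] .
  then have "par w \<notin> set xs" using sD desc_child_subset[OF assms(1)] by blast
  then have "par w \<notin> set (w # xs)" using parent_neq[OF wV assms(2)] by simp
  then have "length (w # xs) - 1 \<le> rk w" using rank_ge[OF p2] by simp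
  then show ?thesis using xs(4) ne by (cases xs) auto
qed

lemma rank_eq_Suc_child: assumes "w \<in> V" "w \<noteq> v" "0 < rk w" shows "\<exists>u\<in>children w. rk w = rk u + 1"
proof -
  obtain xs where xs: "is_path V E xs" "hd xs = w" "par w \<notin> set xs" "rk w = length xs - 1"
    using rank_attained[OF assms(1,2)] by blast
  obtain u ys where u: "xs = w # u # ys"
  proof -
    obtain x xs' where "xs = x # xs'" using is_path_nonempty[OF xs(1)] by (cases xs) auto
    moreover then obtain u ys where "xs' = u # ys" using xs(4) assms(3) by (cases xs') auto
    ultimately show ?thesis using that xs(2) by simp
  qed
  have Ewu: "E w u" and pu: "is_path V E (u # ys)" and wn: "w \<notin> set (u # ys)"
    using xs(1) u by (auto simp: is_path_Cons)
  have upw: "u \<noteq> par w" using xs(3) u by auto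
  have "u \<in> {u. E w u}" using Ewu by simp
  then have uch: "u \<in> children w" using neighbours_eq[OF assms(1)] upw assms(2) by auto
  have "par u = w" using parent_child[OF uch] .
  then have "length (u # ys) - 1 \<le> rk u" using rank_ge[OF pu] wn by simp
  moreover have "rk u + 1 \<le> rk w" using rank_child_less[OF uch assms(2)] .
  ultimately have "rk w = rk u + 1" using xs(4) u by simp
  then show ?thesis using uch by blast
qed

lemma rank_leaf: assumes "w \<in> V" "w \<noteq> v" "children w = {}" shows "rk w = 0"
  using rank_eq_Suc_child[OF assms(1,2)] assms(3) by blast

end

definition subtrees_in :: "('a \<Rightarrow> 'a \<Rightarrow> bool) \<Rightarrow> 'a set \<Rightarrow> 'a \<Rightarrow> 'a set set" where
  "subtrees_in E A w = {S. S \<subseteq> A \<and> w \<in> S \<and> induces_connected E S}"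

lemma walk_across_cut:
  assumes sym: "\<And>a b. E a b \<Longrightarrow> E b a" and disj: "A \<inter> B = {}"
    and cr: "\<And>a b. a \<in> A \<Longrightarrow> b \<in> B \<Longrightarrow> E a b \<Longrightarrow> a = x \<and> b = y"
    and SAB: "S \<subseteq> A \<union> B" and w: "(induced_adj E S)\<^sup>*\<^sup>* p q" and pA: "p \<in> A"
  shows "(q \<in> A \<longrightarrow> (induced_adj E (S \<inter> A))\<^sup>*\<^sup>* p q) \<and>
         (q \<in> B \<longrightarrow> (induced_adj E (S \<inter> A))\<^sup>*\<^sup>* p x \<and> x \<in> S \<and> y \<in> S \<and> (induced_adj E (S \<inter> B))\<^sup>*\<^sup>* y q)"
  using w
proof (induction rule: rtranclp_induct)
  case base
  then show ?case using pA disj by auto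
next
  case (step q r)
  have qr: "E q r" "q \<in> S" "r \<in> S" using step.hyps(2) by auto
  have qAB: "q \<in> A \<or> q \<in> B" and rAB: "r \<in> A \<or> r \<in> B" using qr SAB by auto
  show ?case
  proof (cases "q \<in> A")
    case qA: True
    then have W: "(induced_adj E (S \<inter> A))\<^sup>*\<^sup>* p q" using step.IH by blast
    show ?thesis
    proof (cases "r \<in> A")
      case True
      then have "induced_adj E (S \<inter> A) q r" using qr qA by auto
      then have "(induced_adj E (S \<inter> A))\<^sup>*\<^sup>* p r" using W by (rule rtranclp.rtrancl_into_rtrancl[rotated])
      then show ?thesis using True disj by auto
    next
      case False
      then have rB: "r \<in> B" using rAB by simp
      have "q = x \<and> r = y" using cr[OF qA rB qr(1)] .
      then show ?thesis using W qr False by auto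
    qed
  next
    case qnA: False
    then have qB: "q \<in> B" using qAB by simp
    then have W: "(induced_adj E (S \<inter> A))\<^sup>*\<^sup>* p x" "x \<in> S" "y \<in> S" "(induced_adj E (S \<inter> B))\<^sup>*\<^sup>* y q"
      using step.IH by blast+
    show ?thesis
    proof (cases "r \<in> B")
      case True
      then have "induced_adj E (S \<inter> B) q r" using qr qB by auto
      then have "(induced_adj E (S \<inter> B))\<^sup>*\<^sup>* y r" using W(4) by (rule rtranclp.rtrancl_into_rtrancl[rotated])
      then show ?thesis using True disj W by auto
    next
      case False
      then have rA: "r \<in> A" using rAB by simp
      have "r = x \<and> q = y" using cr[OF rA qB sym[OF qr(1)]] .
      then show ?thesis using W False by auto
    qed
  qed
qed

lemma induces_connected_from:
  assumes sym: "\<And>a b. E a b \<Longrightarrow> E b a" and "x \<in> S" and "\<And>p. p \<in> S \<Longrightarrow> (induced_adj E S)\<^sup>*\<^sup>* x p"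
  shows "induces_connected E S"
  unfolding induces_connected_def
proof (intro conjI ballI)
  show "S \<noteq> {}" using assms(2) by blast
  fix p q assume "p \<in> S" "q \<in> S"
  have "(induced_adj E S)\<^sup>*\<^sup>* p x" using induced_adj_rtranclp_sym[OF sym assms(3)[OF \<open>p \<in> S\<close>]] .
  then show "(induced_adj E S)\<^sup>*\<^sup>* p q" using assms(3)[OF \<open>q \<in> S\<close>] by (rule rtranclp_trans)
qed

lemma induced_adj_rtranclp_mono: "S \<subseteq> S' \<Longrightarrow> (induced_adj E S)\<^sup>*\<^sup>* a b \<Longrightarrow> (induced_adj E S')\<^sup>*\<^sup>* a b"
  by (erule rtranclp_mono[THEN predicate2D, rotated]) auto

lemma subtrees_in_cut_restrict:
  assumes sym: "\<And>a b. E a b \<Longrightarrow> E b a" and disj: "A \<inter> B = {}"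
    and xA: "x \<in> A" and yB: "y \<in> B"
    and cr: "\<And>a b. a \<in> A \<Longrightarrow> b \<in> B \<Longrightarrow> E a b \<Longrightarrow> a = x \<and> b = y"
    and S: "S \<in> subtrees_in E (A \<union> B) x"
  shows "S \<inter> A \<in> subtrees_in E A x" and "S \<inter> B \<in> insert {} (subtrees_in E B y)"
proof -
  have SAB: "S \<subseteq> A \<union> B" and xS: "x \<in> S" and con: "induces_connected E S"
    using S by (auto simp: subtrees_in_def)
  have walk: "\<And>p q. p \<in> S \<Longrightarrow> q \<in> S \<Longrightarrow> (induced_adj E S)\<^sup>*\<^sup>* p q"
    using con by (simp add: induces_connected_def)
  have "induces_connected E (S \<inter> A)"
    unfolding induces_connected_def
  proof (intro conjI ballI)
    show "S \<inter> A \<noteq> {}" using xS xA by blast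
    fix p q assume "p \<in> S \<inter> A" "q \<in> S \<inter> A"
    then show "(induced_adj E (S \<inter> A))\<^sup>*\<^sup>* p q"
      using walk_across_cut[OF sym disj cr SAB walk[of p q]] by blast
  qed
  then show "S \<inter> A \<in> subtrees_in E A x" using xS xA by (auto simp: subtrees_in_def)
  show "S \<inter> B \<in> insert {} (subtrees_in E B y)"
  proof (cases "S \<inter> B = {}")
    case False
    then obtain p0 where p0: "p0 \<in> S \<inter> B" by blast
    have yS: "y \<in> S" using walk_across_cut[OF sym disj cr SAB walk[of x p0] xA] p0 xS by blast
    have "\<And>q. q \<in> S \<inter> B \<Longrightarrow> (induced_adj E (S \<inter> B))\<^sup>*\<^sup>* y q"
      using walk_across_cut[OF sym disj cr SAB walk[of x] xA] xS by blast
    then have "induces_connected E (S \<inter> B)"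
      using induces_connected_from[where E = E and x = y, OF sym] yS yB by blast
    then show ?thesis using yS yB by (auto simp: subtrees_in_def)
  qed simp
qed

lemma subtrees_in_cut_union:
  assumes sym: "\<And>a b. E a b \<Longrightarrow> E b a" and Exy: "E x y"
    and S1: "S1 \<in> subtrees_in E A x" and S2: "S2 \<in> insert {} (subtrees_in E B y)"
  shows "S1 \<union> S2 \<in> subtrees_in E (A \<union> B) x"
proof -
  have S1p: "S1 \<subseteq> A" "x \<in> S1" "induces_connected E S1" using S1 by (auto simp: subtrees_in_def)
  have "(induced_adj E (S1 \<union> S2))\<^sup>*\<^sup>* x p" if "p \<in> S1 \<union> S2" for p
  proof (cases "p \<in> S1")
    case True
    then have "(induced_adj E S1)\<^sup>*\<^sup>* x p" using S1p(2,3) by (simp add: induces_connected_def)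
    then show ?thesis using induced_adj_rtranclp_mono[of S1 "S1 \<union> S2"] by blast
  next
    case False
    then have pS2: "p \<in> S2" using that by blast
    then have S2p: "y \<in> S2" "induces_connected E S2" using S2 by (auto simp: subtrees_in_def)
    then have "(induced_adj E S2)\<^sup>*\<^sup>* y p" using pS2 by (simp add: induces_connected_def)
    then have "(induced_adj E (S1 \<union> S2))\<^sup>*\<^sup>* y p" using induced_adj_rtranclp_mono[of S2 "S1 \<union> S2"] by blast
    moreover have "induced_adj E (S1 \<union> S2) x y" using Exy S1p(2) S2p(1) by blast
    ultimately show ?thesis by (rule converse_rtranclp_into_rtranclp[rotated])
  qed
  then have "induces_connected E (S1 \<union> S2)"
    using induces_connected_from[where E = E and x = x, OF sym] S1p(2) by blast
  then show ?thesis using S1p S2 by (auto simp: subtrees_in_def)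
qed

lemma subtrees_in_cut:
  assumes sym: "\<And>a b. E a b \<Longrightarrow> E b a" and disj: "A \<inter> B = {}"
    and xA: "x \<in> A" and yB: "y \<in> B" and Exy: "E x y"
    and cr: "\<And>a b. a \<in> A \<Longrightarrow> b \<in> B \<Longrightarrow> E a b \<Longrightarrow> a = x \<and> b = y"
  shows "subtrees_in E (A \<union> B) x = (\<lambda>(S1, S2). S1 \<union> S2) ` (subtrees_in E A x \<times> insert {} (subtrees_in E B y))"
    and "inj_on (\<lambda>(S1, S2). S1 \<union> S2) (subtrees_in E A x \<times> insert {} (subtrees_in E B y))"
proof -
  show "subtrees_in E (A \<union> B) x = (\<lambda>(S1, S2). S1 \<union> S2) ` (subtrees_in E A x \<times> insert {} (subtrees_in E B y))"
  proof (intro equalityI subsetI)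
    fix S assume S: "S \<in> subtrees_in E (A \<union> B) x"
    then have "S = (\<lambda>(S1, S2). S1 \<union> S2) (S \<inter> A, S \<inter> B)" by (auto simp: subtrees_in_def)
    then show "S \<in> (\<lambda>(S1, S2). S1 \<union> S2) ` (subtrees_in E A x \<times> insert {} (subtrees_in E B y))"
      using subtrees_in_cut_restrict[OF sym disj xA yB cr S] by blast
  qed (auto intro: subtrees_in_cut_union[where E = E, OF sym Exy])
  show "inj_on (\<lambda>(S1, S2). S1 \<union> S2) (subtrees_in E A x \<times> insert {} (subtrees_in E B y))"
  proof (rule inj_onI)
    fix P Q
    assume "P \<in> subtrees_in E A x \<times> insert {} (subtrees_in E B y)"
      and "Q \<in> subtrees_in E A x \<times> insert {} (subtrees_in E B y)"
      and eq: "(\<lambda>(S1, S2). S1 \<union> S2) P = (\<lambda>(S1, S2). S1 \<union> S2) Q"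
    then have "fst P \<subseteq> A" "fst Q \<subseteq> A" "snd P \<subseteq> B" "snd Q \<subseteq> B"
      by (auto simp: subtrees_in_def)
    moreover have "fst P \<union> snd P = fst Q \<union> snd Q" using eq by (simp add: case_prod_beta)
    ultimately show "P = Q" using disj by (intro prod_eqI) blast+
  qed
qed

lemma subtrees_in_finite: "finite A \<Longrightarrow> finite (subtrees_in E A w)"
  by (rule finite_subset[of _ "Pow A"]) (auto simp: subtrees_in_def)

lemma subtrees_in_empty: "{} \<notin> subtrees_in E A w"
  by (simp add: subtrees_in_def)

lemma subtrees_in_single: "subtrees_in E {w} w = {{w}}"
proof -
  have "induces_connected E {w}" by (simp add: induces_connected_def)
  then show ?thesis by (auto simp: subtrees_in_def)
qed

lemma sum_card_Un_product:
  assumes "finite X" "finite Y" "\<And>S. S \<in> X \<Longrightarrow> S \<subseteq> A" "\<And>T. T \<in> Y \<Longrightarrow> T \<subseteq> B"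
    and "A \<inter> B = {}" "finite A" "finite B"
  shows "(\<Sum>(S, T)\<in>X \<times> Y. real (card (S \<union> T)))
    = real (card Y) * (\<Sum>S\<in>X. real (card S)) + real (card X) * (\<Sum>T\<in>Y. real (card T))"
proof -
  have "real (card (S \<union> T)) = real (card S) + real (card T)" if "S \<in> X" "T \<in> Y" for S T
  proof -
    have "S \<subseteq> A" "T \<subseteq> B" using assms(3,4) that by auto
    then have "finite S" "finite T" "S \<inter> T = {}" using assms(5-7) finite_subset by blast+
    then show ?thesis by (simp add: card_Un_disjoint)
  qed
  then have "(\<Sum>S\<in>X. \<Sum>T\<in>Y. real (card (S \<union> T))) = (\<Sum>S\<in>X. \<Sum>T\<in>Y. real (card S) + real (card T))"
    by (intro sum.cong) auto
  then have "(\<Sum>(S, T)\<in>X \<times> Y. real (card (S \<union> T))) = (\<Sum>S\<in>X. \<Sum>T\<in>Y. real (card S) + real (card T))"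
    by (simp only: sum.cartesian_product)
  also have "\<dots> = real (card Y) * (\<Sum>S\<in>X. real (card S)) + real (card X) * (\<Sum>T\<in>Y. real (card T))"
    by (simp add: sum.distrib sum_distrib_left)
  finally show ?thesis .
qed

lemma subtrees_in_cut_count:
  assumes sym: "\<And>a b. E a b \<Longrightarrow> E b a" and disj: "A \<inter> B = {}"
    and xA: "x \<in> A" and yB: "y \<in> B" and Exy: "E x y"
    and cr: "\<And>a b. a \<in> A \<Longrightarrow> b \<in> B \<Longrightarrow> E a b \<Longrightarrow> a = x \<and> b = y"
    and fA: "finite A" and fB: "finite B"
  shows "real (card (subtrees_in E (A \<union> B) x)) = real (card (subtrees_in E A x)) * (1 + real (card (subtrees_in E B y)))"
    and "(\<Sum>S\<in>subtrees_in E (A \<union> B) x. real (card S)) =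
         (\<Sum>S\<in>subtrees_in E A x. real (card S)) * (1 + real (card (subtrees_in E B y)))
         + real (card (subtrees_in E A x)) * (\<Sum>S\<in>subtrees_in E B y. real (card S))"
proof -
  define X where "X = subtrees_in E A x"
  define Y0 where "Y0 = subtrees_in E B y"
  note cut = subtrees_in_cut[where E = E, OF sym disj xA yB Exy cr, folded X_def Y0_def]
  have fX: "finite X" and fY0: "finite Y0" using subtrees_in_finite fA fB by (auto simp: X_def Y0_def)
  have nY0: "{} \<notin> Y0" using subtrees_in_empty by (simp add: Y0_def)
  have "card (subtrees_in E (A \<union> B) x) = card (X \<times> insert {} Y0)" using cut card_image by metis
  then show "real (card (subtrees_in E (A \<union> B) x)) = real (card (subtrees_in E A x)) * (1 + real (card (subtrees_in E B y)))"
    using fY0 nY0 by (simp add: card_cartesian_product X_def Y0_def algebra_simps)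
  have "(\<Sum>S\<in>subtrees_in E (A \<union> B) x. real (card S)) = (\<Sum>(S, T)\<in>X \<times> insert {} Y0. real (card (S \<union> T)))"
    using cut sum.reindex[OF cut(2), of "\<lambda>S. real (card S)"] by (simp add: case_prod_beta)
  also have "\<dots> = real (card (insert {} Y0)) * (\<Sum>S\<in>X. real (card S)) + real (card X) * (\<Sum>T\<in>insert {} Y0. real (card T))"
    by (rule sum_card_Un_product[where A = A and B = B]) (use fX fY0 disj fA fB in \<open>auto simp: X_def Y0_def subtrees_in_def\<close>)
  finally show "(\<Sum>S\<in>subtrees_in E (A \<union> B) x. real (card S)) =
         (\<Sum>S\<in>subtrees_in E A x. real (card S)) * (1 + real (card (subtrees_in E B y)))
         + real (card (subtrees_in E A x)) * (\<Sum>S\<in>subtrees_in E B y. real (card S))"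
    using fY0 nY0 by (simp add: X_def Y0_def algebra_simps)
qed

lemma mean_bound_glue:
  fixes N S R Nu Su Ru c :: real
  assumes "N \<ge> 0" "S \<ge> N * (1 + R)" "Su \<ge> Nu * (1 + Ru)" "c + Ru \<le> (1 - c) * Nu" "Nu \<ge> 0"
  shows "S * (1 + Nu) + N * Su \<ge> N * (1 + Nu) * (1 + (R + c + Ru))"
proof -
  have a: "S * (1 + Nu) \<ge> N * (1 + R) * (1 + Nu)" using assms(2,5) by (simp add: mult_right_mono)
  have "Su \<ge> (1 + Nu) * (c + Ru)" using assms(3,4) by (simp add: algebra_simps)
  then have b: "N * Su \<ge> N * ((1 + Nu) * (c + Ru))" using assms(1) by (simp add: mult_left_mono)
  have "N * (1 + Nu) * (1 + (R + c + Ru)) = N * (1 + R) * (1 + Nu) + N * ((1 + Nu) * (c + Ru))"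
    by (simp add: algebra_simps)
  then show ?thesis using a b by linarith
qed

lemma weight_bound_glue:
  fixes N R Nu Ru c a :: real
  assumes "N \<ge> 1" "R \<le> (N - 1) / 2" "c + Ru \<le> a * Nu" "a \<le> 1/2" "Nu \<ge> 0"
  shows "R + c + Ru \<le> (N * (1 + Nu) - 1) / 2"
proof -
  have "a * Nu \<le> (1/2) * Nu" using mult_right_mono[OF assms(4,5)] .
  moreover have "Nu \<le> N * Nu" using assms(1,5) by (simp add: mult_right_mono[of 1 N Nu, simplified])
  ultimately show ?thesis using assms(2,3) by (simp add: algebra_simps)
qed

lemma prod_one_plus_ge_2:
  fixes f :: "'b \<Rightarrow> real"
  assumes "finite K" "K \<noteq> {}" "\<And>u. u \<in> K \<Longrightarrow> 1 \<le> f u"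
  shows "2 \<le> (\<Prod>u\<in>K. 1 + f u)"
proof -
  obtain u where u: "u \<in> K" using assms(2) by blast
  have "1 \<le> (\<Prod>u\<in>K - {u}. 1 + f u)"
    by (rule prod_ge_1) (use assms(3) in force)
  moreover have "2 \<le> 1 + f u" using assms(3)[OF u] by simp
  ultimately have "2 * 1 \<le> (1 + f u) * (\<Prod>u\<in>K - {u}. 1 + f u)"
    by (intro mult_mono) auto
  then show ?thesis using prod.remove[OF assms(1) u, of "\<lambda>u. 1 + f u"] by simp
qed

context rooted_tree
begin

definition subtree_count :: "'a set \<Rightarrow> 'a \<Rightarrow> real" where
  "subtree_count A w = real (card (subtrees_in E A w))"

definition subtree_size :: "'a set \<Rightarrow> 'a \<Rightarrow> real" where
  "subtree_size A w = (\<Sum>S\<in>subtrees_in E A w. real (card S))"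

definition rank_weight :: "'a set \<Rightarrow> 'a \<Rightarrow> real" where
  "rank_weight A w = (\<Sum>z\<in>A - {w}. cc (rk z))"

definition branches :: "'a \<Rightarrow> 'a set \<Rightarrow> 'a set" where
  "branches w K = insert w (\<Union>u\<in>K. desc u)"

lemma branches_subset: "w \<in> V \<Longrightarrow> branches w K \<subseteq> V"
  using desc_subset by (auto simp: branches_def)

lemma branches_insert:
  assumes u: "u \<in> children w" and K: "K \<subseteq> children w" "u \<notin> K"
  shows "subtree_count (branches w (insert u K)) w = subtree_count (branches w K) w * (1 + subtree_count (desc u) u)"
    and "subtree_size (branches w (insert u K)) w = subtree_size (branches w K) w * (1 + subtree_count (desc u) u) + subtree_count (branches w K) w * subtree_size (desc u) u"
    and "rank_weight (branches w (insert u K)) w = rank_weight (branches w K) w + cc (rk u) + rank_weight (desc u) u"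
proof -
  have wV: "w \<in> V" and uV: "u \<in> V" and Ewu: "E w u" using child_props[OF u] by auto
  have eq: "branches w (insert u K) = branches w K \<union> desc u" by (auto simp: branches_def)
  have disj: "branches w K \<inter> desc u = {}"
  proof -
    have "w \<notin> desc u" using parent_notin_desc_child[OF u] .
    moreover have "desc u' \<inter> desc u = {}" if "u' \<in> K" for u'
      using desc_disj[of u' w u] that K u by blast
    ultimately show ?thesis by (auto simp: branches_def)
  qed
  have xA: "w \<in> branches w K" by (simp add: branches_def)
  have yB: "u \<in> desc u" using desc_self[OF uV] .
  have cr: "\<And>a b. a \<in> branches w K \<Longrightarrow> b \<in> desc u \<Longrightarrow> E a b \<Longrightarrow> a = w \<and> b = u"
    using branches_cross_edge[OF u K] unfolding branches_def by blast
  have fA: "finite (branches w K)" using branches_subset[OF wV] finite_V finite_subset by blast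
  have fB: "finite (desc u)" using desc_finite .
  note cc = subtrees_in_cut_count[where E = E, OF adj_sym disj xA yB Ewu cr fA fB]
  show "subtree_count (branches w (insert u K)) w = subtree_count (branches w K) w * (1 + subtree_count (desc u) u)"
    using cc(1) eq by (simp add: subtree_count_def)
  show "subtree_size (branches w (insert u K)) w = subtree_size (branches w K) w * (1 + subtree_count (desc u) u) + subtree_count (branches w K) w * subtree_size (desc u) u"
    using cc(2) eq by (simp add: subtree_count_def subtree_size_def)
  have e2: "branches w (insert u K) - {w} = (branches w K - {w}) \<union> desc u" using eq parent_notin_desc_child[OF u] by blast
  have "rank_weight (branches w (insert u K)) w = (\<Sum>z\<in>branches w K - {w}. cc (rk z)) + (\<Sum>z\<in>desc u. cc (rk z))"
    unfolding rank_weight_def e2 by (rule sum.union_disjoint) (use fA fB disj in auto)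
  also have "(\<Sum>z\<in>desc u. cc (rk z)) = cc (rk u) + (\<Sum>z\<in>desc u - {u}. cc (rk z))"
    using sum.remove[OF fB yB] .
  finally show "rank_weight (branches w (insert u K)) w = rank_weight (branches w K) w + cc (rk u) + rank_weight (desc u) u"
    by (simp add: rank_weight_def)
qed

lemma branches_empty: "branches w {} = {w}" by (simp add: branches_def)

lemma subtree_count_single: "subtree_count {w} w = 1" by (simp add: subtree_count_def subtrees_in_single)
lemma subtree_size_single: "subtree_size {w} w = 1" by (simp add: subtree_size_def subtrees_in_single)
lemma rank_weight_single: "rank_weight {w} w = 0" by (simp add: rank_weight_def)

lemma subtree_count_nonneg: "subtree_count A w \<ge> 0" by (simp add: subtree_count_def)

definition weight_bound :: "'a \<Rightarrow> bool" where
  "weight_bound u \<longleftrightarrow> cc (rk u) + rank_weight (desc u) u \<le> acoef (rk u) * subtree_count (desc u) u"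

definition mean_bound :: "'a \<Rightarrow> bool" where
  "mean_bound u \<longleftrightarrow> subtree_count (desc u) u * (1 + rank_weight (desc u) u) \<le> subtree_size (desc u) u"

lemma branches_bounds:
  assumes wV: "w \<in> V" and fK: "finite K"
  shows "K \<subseteq> children w \<Longrightarrow> (\<forall>u\<in>K. weight_bound u \<and> mean_bound u) \<Longrightarrow>
    subtree_count (branches w K) w = (\<Prod>u\<in>K. 1 + subtree_count (desc u) u) \<and>
    subtree_size (branches w K) w \<ge> subtree_count (branches w K) w * (1 + rank_weight (branches w K) w) \<and>
    rank_weight (branches w K) w \<le> (subtree_count (branches w K) w - 1) / 2"
  using fK
proof (induction K rule: finite_induct)
  case empty
  then show ?case by (simp add: branches_empty subtree_count_single subtree_size_single rank_weight_single)
next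
  case (insert u K)
  have u: "u \<in> children w" and Ks: "K \<subseteq> children w" using insert.prems by auto
  have IH: "subtree_count (branches w K) w = (\<Prod>u\<in>K. 1 + subtree_count (desc u) u)"
       "subtree_size (branches w K) w \<ge> subtree_count (branches w K) w * (1 + rank_weight (branches w K) w)"
       "rank_weight (branches w K) w \<le> (subtree_count (branches w K) w - 1) / 2"
    using insert.IH Ks insert.prems(2) by auto
  have Pu: "weight_bound u" "mean_bound u" using insert.prems(2) by auto
  note sp = branches_insert[OF u Ks insert.hyps(2)]
  have N1: "subtree_count (branches w K) w \<ge> 1"
  proof -
    have "(\<Prod>u\<in>K. 1 + subtree_count (desc u) u) \<ge> 1"
      by (rule prod_ge_1) (simp add: subtree_count_nonneg add_increasing2)
    then show ?thesis using IH(1) by simp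
  qed
  have c1: "subtree_count (branches w (insert u K)) w = (\<Prod>u\<in>insert u K. 1 + subtree_count (desc u) u)"
    using sp(1) IH(1) insert.hyps by (simp add: algebra_simps)
  have c2: "subtree_size (branches w (insert u K)) w \<ge> subtree_count (branches w (insert u K)) w * (1 + rank_weight (branches w (insert u K)) w)"
    unfolding sp
    by (rule mean_bound_glue) (use IH(2) N1 Pu subtree_count_nonneg[of "desc u" u] in \<open>auto simp: weight_bound_def mean_bound_def cc_eq_one_minus_acoef\<close>)
  have c3: "rank_weight (branches w (insert u K)) w \<le> (subtree_count (branches w (insert u K)) w - 1) / 2"
    unfolding sp
    by (rule weight_bound_glue[where a = "acoef (rk u)"]) (use IH(3) N1 Pu subtree_count_nonneg[of "desc u" u] acoef_bounds in \<open>auto simp: weight_bound_def\<close>)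
  show ?case using c1 c2 c3 by blast
qed

lemma subtree_count_ge_1:
  assumes "w \<in> A" "A \<subseteq> V"
  shows "1 \<le> subtree_count A w"
proof -
  have "{w} \<in> subtrees_in E A w" using assms by (simp add: subtrees_in_def induces_connected_def)
  moreover have "finite (subtrees_in E A w)"
    using subtrees_in_finite[OF finite_subset[OF assms(2) finite_V]] .
  ultimately have "0 < card (subtrees_in E A w)" by (auto simp: card_gt_0_iff)
  then show ?thesis by (simp add: subtree_count_def)
qed

lemma subtree_count_branches_ge_2:
  assumes wV: "w \<in> V" and "finite K" "K \<noteq> {}" "K \<subseteq> children w"
    and "\<forall>u\<in>K. weight_bound u \<and> mean_bound u"
  shows "2 \<le> subtree_count (branches w K) w"
proof -
  have "1 \<le> subtree_count (desc u) u" if "u \<in> K" for u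
  proof -
    have "u \<in> V" using child_props(1) that assms(4) by blast
    then show ?thesis using subtree_count_ge_1[OF desc_self desc_subset] by simp
  qed
  then show ?thesis using prod_one_plus_ge_2[OF assms(2,3)] branches_bounds[OF wV assms(2,4,5)] by simp
qed

lemma branch_invariants_step:
  assumes wV: "w \<in> V" and wv: "w \<noteq> v" and two: "2 \<le> card (children w)"
    and IH: "\<And>u. u \<in> children w \<Longrightarrow>
      3 * 2 ^ rk u - 2 \<le> subtree_count (desc u) u \<and> weight_bound u \<and> mean_bound u"
  shows "3 * 2 ^ rk w - 2 \<le> subtree_count (desc w) w \<and> weight_bound w \<and> mean_bound w"
proof -
  have fch: "finite (children w)" using children_finite .
  have allP: "\<forall>u\<in>children w. weight_bound u \<and> mean_bound u" using IH by blast
  have Dw: "desc w = branches w (children w)" using desc_decomp[OF wV] by (simp add: branches_def)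
  have P3w: "mean_bound w"
    using branches_bounds[OF wV fch] allP Dw by (auto simp: mean_bound_def)
  obtain u0 where "u0 \<in> children w" using two by fastforce
  then have "0 < rk w" using rank_child_less[OF _ wv] by fastforce
  then obtain u where u: "u \<in> children w" and ru: "rk w = Suc (rk u)"
    using rank_eq_Suc_child[OF wV wv] by fastforce
  define K where "K = children w - {u}"
  have fK: "finite K" and Ks: "K \<subseteq> children w" and uK: "u \<notin> K" using fch by (auto simp: K_def)
  have chK: "children w = insert u K" using u by (auto simp: K_def)
  have Kne: "K \<noteq> {}" using two chK by (cases "K = {}") auto
  have Kres: "rank_weight (branches w K) w \<le> (subtree_count (branches w K) w - 1) / 2"
    using branches_bounds[OF wV fK Ks] allP Ks by auto
  define Q where "Q = subtree_count (branches w K) w"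
  define X where "X = 1 + subtree_count (desc u) u"
  have Q2: "2 \<le> Q"
    unfolding Q_def by (rule subtree_count_branches_ge_2[OF wV fK Kne Ks]) (use allP Ks in auto)
  have Nu: "3 * 2 ^ rk u - 2 \<le> subtree_count (desc u) u" and P2u: "weight_bound u" using IH[OF u] by auto
  have X: "3 * 2 ^ rk u - 1 \<le> X" using Nu by (simp add: X_def)
  note sp = branches_insert[OF u Ks uK]
  have NDw: "subtree_count (desc w) w = Q * X" using sp(1) Dw chK by (simp add: Q_def X_def)
  have RDw: "rank_weight (desc w) w = rank_weight (branches w K) w + cc (rk u) + rank_weight (desc u) u"
    using sp(3) Dw chK by simp
  have P1w: "3 * 2 ^ rk w - 2 \<le> subtree_count (desc w) w"
  proof -
    have "(1::real) \<le> 2 ^ rk u" by simp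
    then have "2 * X \<le> Q * X" using mult_right_mono[OF Q2, of X] X by linarith
    then show ?thesis using NDw X ru by simp
  qed
  have P2w: "weight_bound w"
  proof -
    have "cc (rk u) + rank_weight (desc u) u \<le> acoef (rk u) * subtree_count (desc u) u"
      using P2u by (simp add: weight_bound_def)
    then have "cc (rk w) + rank_weight (desc w) w \<le> cc (Suc (rk u)) + (Q - 1) / 2 + acoef (rk u) * (X - 1)"
      using RDw Kres ru unfolding Q_def X_def by (simp, linarith)
    also have "\<dots> \<le> acoef (rk w) * subtree_count (desc w) w"
      using acoef_step[OF Q2 X] NDw ru by (simp add: mult.assoc)
    finally show ?thesis by (simp add: weight_bound_def)
  qed
  show ?thesis using P1w P2w P3w by blast
qed

lemma nonroot_invariants:
  assumes deg: "\<forall>w\<in>V. w \<noteq> v \<longrightarrow> 2 \<le> degree E w \<longrightarrow> 3 \<le> degree E w"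
  shows "w \<in> V \<Longrightarrow> w \<noteq> v \<Longrightarrow> 3 * 2 ^ rk w - 2 \<le> subtree_count (desc w) w \<and> weight_bound w \<and> mean_bound w"
proof (induction "rk w" arbitrary: w rule: less_induct)
  case less
  then have wV: "w \<in> V" and wv: "w \<noteq> v" by auto
  show ?case
  proof (cases "children w = {}")
    case True
    then have "desc w = {w}" and "rk w = 0"
      using desc_decomp[OF wV] rank_leaf[OF wV wv] by auto
    then show ?thesis
      by (simp add: weight_bound_def mean_bound_def subtree_count_single subtree_size_single rank_weight_single acoef_0 cc_0)
  next
    case False
    then have "1 \<le> card (children w)" using children_finite by (simp add: Suc_leI card_gt_0_iff)
    then have "2 \<le> degree E w" using degree_eq[OF wV] wv by simp
    then have "3 \<le> degree E w" using deg wV wv by blast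
    then have "2 \<le> card (children w)" using degree_eq[OF wV] wv by simp
    moreover have "3 * 2 ^ rk u - 2 \<le> subtree_count (desc u) u \<and> weight_bound u \<and> mean_bound u"
      if "u \<in> children w" for u
      using less.hyps rank_child_less[OF that wv] child_props[OF that] by simp
    ultimately show ?thesis using branch_invariants_step[OF wV wv] by blast
  qed
qed

lemma root_mean_bound:
  assumes deg: "\<forall>w\<in>V. w \<noteq> v \<longrightarrow> 2 \<le> degree E w \<longrightarrow> 3 \<le> degree E w"
  shows "1 + rank_weight V v \<le> local_mean V E v"
proof -
  have allP: "\<forall>u\<in>children v. weight_bound u \<and> mean_bound u"
    using nonroot_invariants[OF deg] child_props by blast
  have DV: "branches v (children v) = V" using desc_decomp[OF vV] desc_root by (simp add: branches_def)
  have "subtree_count V v * (1 + rank_weight V v) \<le> subtree_size V v"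
    using branches_bounds[OF vV children_finite[of v]] allP DV by auto
  moreover have "1 \<le> subtree_count V v" using subtree_count_ge_1[OF vV] by simp
  ultimately have "1 + rank_weight V v \<le> subtree_size V v / subtree_count V v"
    by (simp add: pos_le_divide_eq mult.commute)
  then show ?thesis
    by (simp add: local_mean_def subtree_size_def subtree_count_def subtrees_at_def subtrees_in_def)
qed

lemma rank_weight_eq_sum_m_rank: "rank_weight V v = (\<Sum>j<card V. cc j * real (m_rank V E v j))"
proof -
  have "rank_weight V v = (\<Sum>j<card V. \<Sum>z\<in>{z \<in> V - {v}. rk z = j}. cc (rk z))"
    unfolding rank_weight_def by (rule sum.group[symmetric]) (use finite_V rank_less_card in auto)
  also have "\<dots> = (\<Sum>j<card V. cc j * real (m_rank V E v j))"
  proof (rule sum.cong[OF refl])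
    fix j
    have "{z \<in> V - {v}. rk z = j} = {w \<in> V. w \<noteq> v \<and> rank V E v w = j}" by auto
    then show "(\<Sum>z\<in>{z \<in> V - {v}. rk z = j}. cc (rk z)) = cc j * real (m_rank V E v j)"
      by (simp add: m_rank_def)
  qed
  finally show ?thesis .
qed

end

theorem mainTheorem4:
  fixes V :: "'a set" and E :: "'a \<Rightarrow> 'a \<Rightarrow> bool" and v :: 'a
  assumes "is_tree V E" and "v \<in> V" and "in_T3star V E v"
  shows "local_mean V E v \<ge> 1 + (\<Sum>j<card V. cc j * real (m_rank V E v j))"
proof -
  interpret rooted_tree V E v using assms(1,2) by unfold_locales
  have "\<forall>w\<in>V. w \<noteq> v \<longrightarrow> 2 \<le> degree E w \<longrightarrow> 3 \<le> degree E w"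
    using assms(3) unfolding in_T3star_def by auto
  then show ?thesis using root_mean_bound rank_weight_eq_sum_m_rank by simp
qed

end
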